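(* Let $a\in\mathbb{C}$ and $b=0$, and suppose $\cdot_\lambda\cdot$ is a compatible left-symmetric conformal algebraic structure on $\mathcal{W}(a,0)=\mathbb{C}[\partial]L\oplus\mathbb{C}[\partial]W$ such that $\mathbb{C}[\partial]L$ is a left-symmetric conformal subalgebra. Let $c\in\mathbb{C}$ with $L_\lambda L=(\partial+\lambda+c)L$, and write $L_\lambda W=g_1L+g_2W$, $W_\lambda L=h_1L+h_2W$, $W_\lambda W=k_1L+k_2W$ with $g_i,h_i,k_i\in\mathbb{C}[\lambda,\partial]$. Assume $c\neq0$, $g_2(\lambda,\partial)=\partial+a\lambda+c$ and $h_2(\lambda,\partial)=c$. Then one of the following holds: (B3) $h_1=g_1=k_1=k_2=0$, $h_2=c$, $g_2=\partial+a\lambda+c$; (B4) $a=1$, $h_1=g_1=0$, $h_2=c$, $g_2=\partial+\lambda+c$, and $k_1,k_2$ are constants with $(k_1,k_2)\in\mathbb{C}^2\setminus\{(0,0)\}$.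
   Context: A conformal algebra is a $\mathbb{C}[\partial]$-module $R$ with a $\mathbb{C}$-bilinear map $R\times R\to R[\lambda]$, $(x,y)\mapsto x_\lambda y$, satisfying $(\partial x)_\lambda y=-\lambda\, x_\lambda y$ and $x_\lambda(\partial y)=(\partial+\lambda)\,x_\lambda y$. For $x,y\in R$, $y_{-\lambda-\partial}x$ means: write $y_\mu x=\sum_j \mu^j z_j$ and set $y_{-\lambda-\partial}x=\sum_j(-\lambda-\partial)^j z_j$. A left-symmetric conformal algebra is a conformal algebra with $(x_\lambda y)_{\lambda+\mu}z-x_\lambda(y_\mu z)=(y_\mu x)_{\lambda+\mu}z-y_\mu(x_\lambda z)$. A compatible left-symmetric conformal algebraic structure on a Lie conformal algebra $(R,[\cdot_\lambda\cdot])$ is a left-symmetric conformal product on the same $\mathbb{C}[\partial]$-module with $x_\lambda y-y_{-\lambda-\partial}x=[x_\lambda y]$ for all $x,y$. $\mathcal{W}(a,b)$ is the free $\mathbb{C}[\partial]$-module with basis $L,W$ and Lie conformal brackets $[L_\lambda L]=(\partial+2\lambda)L$, $[L_\lambda W]=(\partial+a\lambda+b)W$, $[W_\lambda W]=0$. "$\mathbb{C}[\partial]L$ is a left-symmetric conformal subalgebra" means $L_\lambda L\in(\mathbb{C}[\partial]L)[\lambda]$; in that case $L_\lambda L=(\partial+\lambda+c)L$ for some $c\in\mathbb{C}$. *)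

theory Defs
  imports "HOL-Computational_Algebra.Polynomial"
begin

datatype gen = Lg | Wg

text \<open>Polynomials in (lambda, d) are represented as complex poly poly:
  outer variable lambda, coefficients polynomials in d.  Evaluation:\<close>
definition ev2 :: "complex poly poly \<Rightarrow> complex \<Rightarrow> complex \<Rightarrow> complex" where
  "ev2 P l d = poly (map_poly (\<lambda>q. poly q d) P) l"

text \<open>Elements of R: coefficient functions gen => C[d].\<close>
type_synonym elt = "gen \<Rightarrow> complex poly"

definition basis_elt :: "gen \<Rightarrow> elt" where
  "basis_elt a = (\<lambda>b. if b = a then 1 else 0)"

text \<open>A conformal product on R is determined (by sesquilinearity) by its structure
  polynomials: sc a b c = coefficient of c in  a_lambda b.  The product
  x_lambda y evaluated at lambda = l, d = d, component c:
  (p(d)a)_l (r(d)b) = p(-l) r(l+d) a_l b.\<close>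
definition prodv :: "(gen \<Rightarrow> gen \<Rightarrow> gen \<Rightarrow> complex poly poly) \<Rightarrow> elt \<Rightarrow> elt
    \<Rightarrow> complex \<Rightarrow> complex \<Rightarrow> gen \<Rightarrow> complex" where
  "prodv sc x y l d c =
     (\<Sum>a\<in>{Lg, Wg}. \<Sum>b\<in>{Lg, Wg}. poly (x a) (-l) * poly (y b) (l + d) * ev2 (sc a b c) l d)"

text \<open>(x_l y)_{l+m} z, evaluated at d, component c.\<close>
definition lsterm1 :: "(gen \<Rightarrow> gen \<Rightarrow> gen \<Rightarrow> complex poly poly) \<Rightarrow> elt \<Rightarrow> elt \<Rightarrow> elt
    \<Rightarrow> complex \<Rightarrow> complex \<Rightarrow> complex \<Rightarrow> gen \<Rightarrow> complex" where
  "lsterm1 sc x y z l m d c =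
     (\<Sum>e\<in>{Lg, Wg}. prodv sc x y l (-l-m) e * prodv sc (basis_elt e) z (l+m) d c)"

text \<open>x_l (y_m z), evaluated at d, component c.\<close>
definition lsterm2 :: "(gen \<Rightarrow> gen \<Rightarrow> gen \<Rightarrow> complex poly poly) \<Rightarrow> elt \<Rightarrow> elt \<Rightarrow> elt
    \<Rightarrow> complex \<Rightarrow> complex \<Rightarrow> complex \<Rightarrow> gen \<Rightarrow> complex" where
  "lsterm2 sc x y z l m d c =
     (\<Sum>e\<in>{Lg, Wg}. prodv sc y z m (l+d) e * prodv sc x (basis_elt e) l d c)"

text \<open>Left-symmetry identity, as a polynomial identity in (lambda, mu, d),
  checked pointwise on C^3 (equivalent for polynomials over C).\<close>
definition left_symmetric :: "(gen \<Rightarrow> gen \<Rightarrow> gen \<Rightarrow> complex poly poly) \<Rightarrow> bool" where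
  "left_symmetric sc \<longleftrightarrow> (\<forall>x y z l m d c.
     lsterm1 sc x y z l m d c - lsterm2 sc x y z l m d c =
     lsterm1 sc y x z m l d c - lsterm2 sc y x z m l d c)"

text \<open>Lie conformal brackets of W(a,b); [W_l L] = -[L_{-l-d} W] = ((a-1)d + a l - b) W
  by skew-symmetry.\<close>
definition Wbr :: "complex \<Rightarrow> complex \<Rightarrow> gen \<Rightarrow> gen \<Rightarrow> gen \<Rightarrow> complex poly poly" where
  "Wbr a b x y c =
    (case (x, y, c) of
       (Lg, Lg, Lg) \<Rightarrow> [:[:0, 1:], [:2:]:]
     | (Lg, Wg, Wg) \<Rightarrow> [:[:b, 1:], [:a:]:]
     | (Wg, Lg, Wg) \<Rightarrow> [:[:-b, a - 1:], [:a:]:]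
     | _ \<Rightarrow> 0)"

definition compatible :: "(gen \<Rightarrow> gen \<Rightarrow> gen \<Rightarrow> complex poly poly)
    \<Rightarrow> (gen \<Rightarrow> gen \<Rightarrow> gen \<Rightarrow> complex poly poly) \<Rightarrow> bool" where
  "compatible sc br \<longleftrightarrow> (\<forall>x y l d c.
     prodv sc x y l d c - prodv sc y x (-l-d) d c = prodv br x y l d c)"

end

theory Submission
  imports Defs
begin

text \<open>
  Writing the unknown structure polynomials as \<open>h1\<close>, \<open>g1\<close>, \<open>k1\<close>, \<open>k2\<close>, compatibility
  gives \<open>g1(\<lambda>, \<partial>) = h1(-\<lambda>-\<partial>, \<partial>)\<close> and makes \<open>k1\<close>, \<open>k2\<close> invariant under
  \<open>\<lambda> \<mapsto> -\<lambda>-\<partial>\<close>, and each component of left symmetry becomes a polynomial identity in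
  \<open>(\<lambda>, \<mu>, \<partial>)\<close>. Differentiating two of them in \<open>\<mu>\<close> at \<open>\<mu> = 0\<close> yields first-order PDEs
  for \<open>h1\<close>. Comparing \<open>\<lambda>\<^sup>j\<close>-coefficients, each \<open>h1\<^sub>j\<close> (\<open>j \<ge> 1\<close>) solves
  \<open>(\<partial> + c) h' = (a - 1 - j) h\<close>, so it has degree \<open>a - 1 - j\<close> when nonzero, while a
  recurrence between consecutive coefficients forces \<open>h1\<^sub>j\<close> to be constant for \<open>j \<ge> 2\<close>.
  Thus \<open>h1 = 0\<close> unless \<open>a = n + 1\<close>, and the few remaining shapes of \<open>h1\<close>
  (\<open>n = 1\<close>, \<open>n = 2\<close>, \<open>n \<ge> 3\<close>) are ruled out by evaluating the identities at a few
  points, using \<open>c \<noteq> 0\<close>.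

  Once \<open>h1 = g1 = 0\<close>, the constant term \<open>f\<close> of \<open>k2\<close> satisfies the transport equation
  \<open>(\<partial> + a\<mu> + c) f(\<mu> + \<partial>) = (\<partial> + c + (2a - 1)\<mu>) f(\<partial>)\<close>, whose polynomial solutions
  are constants, and zero unless \<open>a = 1\<close>. Then \<open>k1\<close> is constant as well, and one more
  identity gives \<open>(1 - a) k1 = 0\<close>.
\<close>

lemma ev2_0 [simp]: "ev2 0 x d = 0"
  by (simp add: ev2_def)

lemma ev2_pCons [simp]: "ev2 (pCons q P) x d = poly q d + x * ev2 P x d"
  by (simp add: ev2_def map_poly_pCons)

lemma ev2_add [simp]: "ev2 (P + Q) x d = ev2 P x d + ev2 Q x d"
  by (induction P Q rule: poly_induct2) (simp_all add: algebra_simps)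

lemma ev2_uminus [simp]: "ev2 (- P) x d = - ev2 P x d"
  by (induction P) (simp_all add: algebra_simps)

lemma ev2_diff [simp]: "ev2 (P - Q) x d = ev2 P x d - ev2 Q x d"
  using ev2_add[of P "- Q"] by simp

lemma ev2_smult [simp]: "ev2 (smult q P) x d = poly q d * ev2 P x d"
  by (induction P) (simp_all add: algebra_simps)

lemma ev2_monom [simp]: "ev2 (monom q n) x d = poly q d * x ^ n"
  by (simp add: ev2_def map_poly_monom poly_monom)

lemma ev2_map_poly_mult: "ev2 (map_poly ((*) r) P) x d = poly r d * ev2 P x d"
  by (induction P) (simp_all add: map_poly_pCons algebra_simps)

lemma ev2_map_poly_const [simp]: "ev2 (map_poly (\<lambda>z. [:z:]) S) x d = poly S x"
  by (simp add: ev2_def map_poly_map_poly o_def)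

lemma ev2_0_left: "ev2 P 0 d = poly (coeff P 0) d"
  by (simp add: ev2_def poly_0_coeff_0 coeff_map_poly)

lemma poly_poly_linear: "poly (poly P [:u, v:]) d = ev2 P (u + v * d) d"
  by (induction P) (simp_all add: algebra_simps)

lemma ev2_eqI:
  assumes "\<And>x d. ev2 P x d = ev2 Q x d"
  shows "P = Q"
proof -
  have "poly (map_poly (\<lambda>q. poly q d) (P - Q)) x = 0" for x d
    using assms[of x d] unfolding ev2_def[symmetric] by simp
  then have "map_poly (\<lambda>q. poly q d) (P - Q) = 0" for d
    using poly_all_0_iff_0 by blast
  then have "poly (coeff (P - Q) i) d = 0" for i d
    by (metis coeff_0 coeff_map_poly poly_0)
  then have "coeff (P - Q) i = 0" for i
    using poly_all_0_iff_0 by blast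
  then show ?thesis
    by (simp add: poly_eq_iff)
qed

lemma has_field_derivative_ev2:
  assumes f: "(f has_field_derivative f') (at x within S)"
    and g: "(g has_field_derivative g') (at x within S)"
  shows "((\<lambda>t. ev2 P (f t) (g t)) has_field_derivative
     f' * ev2 (pderiv P) (f x) (g x) + g' * ev2 (map_poly pderiv P) (f x) (g x)) (at x within S)"
proof (induction P)
  case 0
  then show ?case by (simp add: pderiv_0)
next
  case (pCons q P)
  have "((\<lambda>t. poly q (g t)) has_field_derivative g' * poly (pderiv q) (g x)) (at x within S)"
    using DERIV_chain2[OF poly_DERIV g] by (simp add: mult.commute)
  from DERIV_add[OF this DERIV_mult[OF f pCons.IH]] show ?case
    by (simp add: pderiv_pCons map_poly_pCons pderiv_0 algebra_simps)
qed

lemma has_field_derivative_ev2_eq [derivative_intros]: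
  assumes "(f has_field_derivative f') (at x within S)"
    and "(g has_field_derivative g') (at x within S)"
    and "D = f' * ev2 (pderiv P) (f x) (g x) + g' * ev2 (map_poly pderiv P) (f x) (g x)"
  shows "((\<lambda>t. ev2 P (f t) (g t)) has_field_derivative D) (at x within S)"
  using has_field_derivative_ev2[OF assms(1,2)] assms(3) by simp

lemma has_field_derivative_zero_fun:
  assumes "(f has_field_derivative D) (at x)" and "\<And>t. f t = 0"
  shows "D = (0::complex)"
proof -
  have "f = (\<lambda>_. 0)"
    using assms(2) by auto
  with assms(1) show ?thesis
    using DERIV_const DERIV_unique by blast
qed

lemma degree_eq_of_linear_ode:
  fixes q :: "complex poly"
  assumes ode: "[:c, 1:] * pderiv q = smult k q" and "q \<noteq> 0"
  shows "k = of_nat (degree q)"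
proof -
  let ?n = "degree q"
  have "coeff ([:c, 1:] * pderiv q) ?n = of_nat ?n * coeff q ?n"
    by (cases ?n) (simp_all add: mult_pCons_left coeff_pderiv coeff_eq_0)
  moreover have "coeff ([:c, 1:] * pderiv q) ?n = k * coeff q ?n"
    by (simp only: ode coeff_smult)
  ultimately show ?thesis
    using \<open>q \<noteq> 0\<close> by simp
qed

lemma linear_ode_solution:
  fixes q :: "complex poly"
  assumes ode: "[:c, 1:] * pderiv q = smult (of_nat n) q"
  shows "q = smult (coeff q n) ([:c, 1:] ^ n)"
proof (rule ccontr)
  define p where "p = [:c, 1:] ^ n"
  define r where "r = q - smult (coeff q n) p"
  assume "q \<noteq> smult (coeff q n) ([:c, 1:] ^ n)"
  then have "r \<noteq> 0" unfolding r_def p_def by simp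
  have "[:c, 1:] * pderiv p = smult (of_nat n) p"
  proof (cases n)
    case (Suc k)
    have "pderiv [:c, 1::complex:] = 1"
      by (simp add: pderiv_pCons)
    then have "pderiv p = smult (of_nat n) ([:c, 1:] ^ k)"
      unfolding p_def Suc by (simp only: pderiv_power_Suc mult_1_right)
    then show ?thesis
      unfolding p_def Suc by (simp add: mult_smult_right)
  qed (simp add: p_def)
  then have "[:c, 1:] * pderiv r = smult (of_nat n) r"
    unfolding r_def using ode by (simp add: pderiv_diff pderiv_smult algebra_simps smult_diff_right)
  then have "of_nat n = (of_nat (degree r) :: complex)"
    by (rule degree_eq_of_linear_ode[OF _ \<open>r \<noteq> 0\<close>])
  then have "degree r = n"
    by simp
  moreover have "coeff r n = 0"
    unfolding r_def p_def by (simp add: coeff_linear_power)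
  ultimately show False
    using \<open>r \<noteq> 0\<close> by (metis leading_coeff_0_iff)
qed

lemma poly_eq_const_if_eq_off_point:
  fixes p :: "'a::{idom, ring_char_0} poly"
  assumes "\<And>t. t \<noteq> t0 \<Longrightarrow> poly p t = K"
  shows "poly p t = K"
proof -
  have "UNIV - {t0} \<subseteq> {t. poly (p - [:K:]) t = 0}"
    using assms by auto
  moreover have "infinite (UNIV - {t0})"
    by (simp add: infinite_UNIV_char_0)
  ultimately have "infinite {t. poly (p - [:K:]) t = 0}"
    using infinite_super by blast
  then have "p - [:K:] = 0"
    using poly_roots_finite by blast
  then show ?thesis by simp
qed

lemma poly_transport_equation:
  fixes p :: "complex poly"
  assumes feq: "\<And>m d. (d + a * m + c) * poly p (m + d) = (d + c + (2 * a - 1) * m) * poly p d"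
  obtains K where "\<And>t. poly p t = K" and "a \<noteq> 1 \<Longrightarrow> K = 0"
proof (cases "a = 1")
  case True
  have "poly p t = poly p 0" if "t \<noteq> -c" for t
  proof -
    have "(t + c) * poly p t = (t + c) * poly p 0"
      using feq[where m = t and d = 0] True by (simp add: algebra_simps)
    moreover have "t + c \<noteq> 0"
      using that by (simp add: eq_neg_iff_add_eq_0)
    ultimately show ?thesis by simp
  qed
  then show ?thesis
    using that True poly_eq_const_if_eq_off_point by blast
next
  case False
  have "poly p t = 0" if "t \<noteq> -c" for t
  proof -
    \<comment> \<open>choose \<open>m + d = t\<close> so that the right-hand side vanishes\<close>
    define m where "m = - (t + c) / (2 * (a - 1))"
    have "(a - 1) * m = - (t + c) / 2"
      using False unfolding m_def by (simp add: field_simps)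
    then have lhs: "t - m + a * m + c = (t + c) / 2" and rhs: "t - m + c + (2 * a - 1) * m = 0"
      by (simp_all add: algebra_simps)
    have "(t + c) / 2 * poly p t = 0"
      using feq[where m = m and d = "t - m"] unfolding lhs rhs by simp
    moreover have "t + c \<noteq> 0"
      using that by (simp add: eq_neg_iff_add_eq_0)
    ultimately show ?thesis by simp
  qed
  then show ?thesis
    using that False poly_eq_const_if_eq_off_point by blast
qed

lemma const_if_shift_invariant:
  fixes F :: "'a::ab_group_add \<Rightarrow> 'a \<Rightarrow> 'b"
  assumes shift: "\<And>l m d. F m (l + d) = F l (m + d)"
    and symm: "\<And>l d. F l d = F (- l - d) d"
  shows "F l d = F 0 0"
  using shift[of 0 l d] symm[of 0 "l + d"] shift[of 0 "- (l + d)" "l + d"] by simp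

lemma two_power_plus_minus_one_power_neq_1:
  assumes "k \<ge> 2"
  shows "(2::complex) ^ k + (-1) ^ k \<noteq> 1"
proof (cases "even k")
  case False
  have "(2::nat) ^ 2 \<le> 2 ^ k"
    using assms by (rule power_increasing) simp
  then have "(2::nat) ^ k \<noteq> 2"
    by auto
  then have "(of_nat (2 ^ k) :: complex) \<noteq> of_nat 2"
    by (simp only: of_nat_eq_iff) simp
  with False show ?thesis
    by simp
qed simp

lemma prodv_basis_elt [simp]: "prodv sc (basis_elt x) (basis_elt y) l d e = ev2 (sc x y e) l d"
  by (cases x; cases y) (simp_all add: prodv_def basis_elt_def)

lemma left_symmetric_basis_elt:
  assumes "left_symmetric sc"
  shows "ev2 (sc x y Lg) l (-l-m) * ev2 (sc Lg z e) (l+m) d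
        + ev2 (sc x y Wg) l (-l-m) * ev2 (sc Wg z e) (l+m) d
      - (ev2 (sc y z Lg) m (l+d) * ev2 (sc x Lg e) l d + ev2 (sc y z Wg) m (l+d) * ev2 (sc x Wg e) l d)
    = ev2 (sc y x Lg) m (-m-l) * ev2 (sc Lg z e) (l+m) d
        + ev2 (sc y x Wg) m (-m-l) * ev2 (sc Wg z e) (l+m) d
      - (ev2 (sc x z Lg) l (m+d) * ev2 (sc y Lg e) m d + ev2 (sc x z Wg) l (m+d) * ev2 (sc y Wg e) m d)"
  using assms[unfolded left_symmetric_def, rule_format,
      of "basis_elt x" "basis_elt y" "basis_elt z" l m d e]
  by (simp add: lsterm1_def lsterm2_def add.commute)

lemma compatible_basis_elt:
  assumes "compatible sc br"
  shows "ev2 (sc x y e) l d - ev2 (sc y x e) (-l-d) d = ev2 (br x y e) l d"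
  using assms[unfolded compatible_def, rule_format, of "basis_elt x" "basis_elt y" l d e]
  by simp

locale W_a0_compatible_lsca =
  fixes a c :: complex
    and sc :: "gen \<Rightarrow> gen \<Rightarrow> gen \<Rightarrow> complex poly poly"
  assumes ls: "left_symmetric sc"
    and comp: "compatible sc (Wbr a 0)"
    and LL_L: "sc Lg Lg Lg = [:[:c, 1:], [:1:]:]"
    and LL_W: "sc Lg Lg Wg = 0"
    and c0: "c \<noteq> 0"
    and g2: "sc Lg Wg Wg = [:[:c, 1:], [:a:]:]"
    and h2: "sc Wg Lg Wg = [:[:c:]:]"
begin

abbreviation "h1 \<equiv> sc Wg Lg Lg"
abbreviation "g1 \<equiv> sc Lg Wg Lg"
abbreviation "k1 \<equiv> sc Wg Wg Lg"
abbreviation "k2 \<equiv> sc Wg Wg Wg"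

lemma g1_eq: "ev2 g1 l d = ev2 h1 (-l-d) d"
  using compatible_basis_elt[OF comp, of Lg Wg Lg l d] by (simp add: Wbr_def)

lemma k1_symm: "ev2 k1 l d = ev2 k1 (-l-d) d"
  using compatible_basis_elt[OF comp, of Wg Wg Lg l d] by (simp add: Wbr_def)

lemma k2_symm: "ev2 k2 l d = ev2 k2 (-l-d) d"
  using compatible_basis_elt[OF comp, of Wg Wg Wg l d] by (simp add: Wbr_def)

lemmas ls_simps = LL_L LL_W g2 h2 minus_diff_commute

text \<open>\<open>ls_XYZ_E\<close> is the \<open>E\<close>-component of the left-symmetry identity for
  \<open>(x, y, z) = (X, Y, Z)\<close>, evaluated at \<open>\<lambda> = l\<close>, \<open>\<mu> = m\<close>, \<open>\<partial> = d\<close>.\<close>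

lemma ls_WLL_L:
  "(l+m-a*m) * ev2 h1 (l+m) d
    = (l+d+m+c) * ev2 h1 l d - (d+m+c) * ev2 h1 l (m+d) - c * ev2 h1 (-m-d) d"
  using left_symmetric_basis_elt[OF ls, of Wg Lg l m Lg Lg d] g1_eq[of m "-l-m"] g1_eq[of m d]
  by (simp add: ls_simps algebra_simps)

lemma ls_LLW_L:
  "(c-m) * ev2 g1 (l+m) d - (d+l+c) * ev2 g1 m (l+d) - (l+d+a*m+c) * ev2 g1 l d
    = (c-l) * ev2 g1 (l+m) d - (d+m+c) * ev2 g1 l (m+d) - (m+d+a*l+c) * ev2 g1 m d"
  using left_symmetric_basis_elt[OF ls, of Lg Lg l m Wg Lg d]
  by (simp add: ls_simps algebra_simps)

lemma ls_WLW_W: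
  "(l+m-a*m) * ev2 k2 (l+m) d - (l+d+a*m+c) * ev2 k2 l d + (d+a*m+c) * ev2 k2 l (m+d)
    = c * ev2 g1 m (l+d)"
  using left_symmetric_basis_elt[OF ls, of Wg Lg l m Wg Wg d] g1_eq[of m "-l-m"]
  by (simp add: ls_simps algebra_simps)

lemma ls_WLW_L:
  "(l+m-a*m) * ev2 k1 (l+m) d - (l+d+a*m+c) * ev2 k1 l d + (d+m+c) * ev2 k1 l (m+d)
    = ev2 g1 m (l+d) * ev2 h1 l d - ev2 k2 l (m+d) * ev2 g1 m d"
  using left_symmetric_basis_elt[OF ls, of Wg Lg l m Wg Lg d] g1_eq[of m "-l-m"]
  by (simp add: ls_simps algebra_simps)

lemma ls_WWL_L:
  "ev2 h1 m (l+d) * ev2 h1 l d + c * ev2 k1 l d = ev2 h1 l (m+d) * ev2 h1 m d + c * ev2 k1 m d"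
  using left_symmetric_basis_elt[OF ls, of Wg Wg l m Lg Lg d] k1_symm[of l "-l-m"]
    k2_symm[of l "-l-m"]
  by (simp add: ls_simps algebra_simps)

lemma ls_WWL_W: "ev2 k2 l d - ev2 k2 m d = ev2 h1 l (m+d) - ev2 h1 m (l+d)"
proof -
  have "c * (ev2 k2 l d - ev2 k2 m d) = c * (ev2 h1 l (m+d) - ev2 h1 m (l+d))"
    using left_symmetric_basis_elt[OF ls, of Wg Wg l m Lg Wg d] k2_symm[of l "-l-m"]
    by (simp add: ls_simps algebra_simps)
  then show ?thesis
    using c0 by simp
qed

lemma ls_WWW_W:
  "c * ev2 k1 m (l+d) + ev2 k2 m (l+d) * ev2 k2 l d
    = c * ev2 k1 l (m+d) + ev2 k2 l (m+d) * ev2 k2 m d"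
  using left_symmetric_basis_elt[OF ls, of Wg Wg l m Wg Wg d] k1_symm[of l "-l-m"]
    k2_symm[of l "-l-m"]
  by (simp add: ls_simps algebra_simps)

lemma h1_antidiagonal: "ev2 h1 (-d) d = 0"
  using ls_WLL_L[of 0 0 d] c0 by simp

text \<open>The next two identities are the \<open>\<mu>\<close>-derivatives at \<open>\<mu> = 0\<close> of \<open>ls_WLL_L\<close>
  and of \<open>ls_LLW_L\<close> (the latter at \<open>\<lambda> = -y-d\<close>).\<close>

lemma h1_pde:
  "(1-a) * ev2 h1 l d + l * ev2 (pderiv h1) l d + (d+c) * ev2 (map_poly pderiv h1) l d
    = c * ev2 (pderiv h1) (-d) d"
proof -
  define F where "F m = (l+m-a*m) * ev2 h1 (l+m) d
    - ((l+d+m+c) * ev2 h1 l d - (d+m+c) * ev2 h1 l (m+d) - c * ev2 h1 (-m-d) d)" for m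
  have F': "(F has_field_derivative (1-a) * ev2 h1 l d + l * ev2 (pderiv h1) l d
      + (d+c) * ev2 (map_poly pderiv h1) l d - c * ev2 (pderiv h1) (-d) d) (at 0)"
    unfolding F_def by (rule derivative_eq_intros refl | simp add: algebra_simps)+
  have F0: "F m = 0" for m
    using ls_WLL_L[of l m d] by (simp add: F_def)
  from has_field_derivative_zero_fun[OF F' F0] show ?thesis
    by (simp add: algebra_simps)
qed

lemma g1_pde:
  "(y-c) * ev2 (pderiv h1) y d + (d+c) * ev2 (map_poly pderiv h1) y d
      + (c-y) * ev2 (pderiv h1) y (-y)
    = a * ev2 h1 y d + (d+c-a*(y+d)) * ev2 (pderiv h1) (-d) d"
proof -
  define F where "F m = (c-m) * ev2 h1 (y-m) d - (c-y) * ev2 h1 (y-m) (-y) - (a*m-y+c) * ev2 h1 y d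
    - (c+y+d) * ev2 h1 (y-m) d + (d+m+c) * ev2 h1 (y-m) (m+d)
    + (m+d-a*(y+d)+c) * ev2 h1 (-m-d) d" for m
  have F': "(F has_field_derivative (y-c) * ev2 (pderiv h1) y d
      + (d+c) * ev2 (map_poly pderiv h1) y d + (c-y) * ev2 (pderiv h1) y (-y)
      - a * ev2 h1 y d - (d+c-a*(y+d)) * ev2 (pderiv h1) (-d) d) (at 0)"
    unfolding F_def
    by (rule derivative_eq_intros refl | simp add: h1_antidiagonal algebra_simps)+
  have F0: "F m = 0" for m
    using ls_LLW_L[of "-y-d" m d] unfolding F_def g1_eq by (simp add: algebra_simps)
  from has_field_derivative_zero_fun[OF F' F0] show ?thesis
    by (simp add: algebra_simps)
qed

lemma h1_pde_reduced:
  "c * ev2 (pderiv h1) y d + ev2 h1 y d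
    = ((a-1)*d + a*y) * ev2 (pderiv h1) (-d) d + (c-y) * ev2 (pderiv h1) y (-y)"
proof -
  let ?X = "ev2 (pderiv h1)" and ?D = "ev2 (map_poly pderiv h1)"
  have "c * ?X y d + ev2 h1 y d - (((a-1)*d + a*y) * ?X (-d) d + (c-y) * ?X y (-y))
    = ((1-a) * ev2 h1 y d + y * ?X y d + (d+c) * ?D y d - c * ?X (-d) d)
      - ((y-c) * ?X y d + (d+c) * ?D y d + (c-y) * ?X y (-y)
         - (a * ev2 h1 y d + (d+c-a*(y+d)) * ?X (-d) d))"
    by (simp add: algebra_simps)
  also have "\<dots> = 0"
    using h1_pde[of y d] g1_pde[of y d] by simp
  finally show ?thesis
    by simp
qed

definition h1_diag :: "complex poly" where
  "h1_diag = poly (pderiv h1) [:0, -1:]"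

lemma poly_h1_diag: "poly h1_diag t = ev2 (pderiv h1) (-t) t"
  by (simp add: h1_diag_def poly_poly_linear)

lemma h1_pde_poly:
  "smult [:1-a:] h1 + pCons 0 (pderiv h1) + map_poly ((*) [:c, 1:]) (map_poly pderiv h1)
    = [:smult c h1_diag:]"
  by (rule ev2_eqI) (use h1_pde in \<open>simp add: ev2_map_poly_mult poly_h1_diag algebra_simps\<close>)

lemma h1_pde_reduced_poly:
  "smult [:c:] (pderiv h1) + h1
    = [:smult (a-1) (pCons 0 h1_diag):] + pCons 0 [:smult a h1_diag:]
      + map_poly (\<lambda>z. [:z:]) ([:c, -1:] * pcompose h1_diag [:0, -1:])"
  by (rule ev2_eqI)
    (use h1_pde_reduced in \<open>simp add: poly_pcompose poly_h1_diag algebra_simps\<close>)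

lemma h1_coeff_ode:
  assumes "j \<ge> 1"
  shows "[:c, 1:] * pderiv (coeff h1 j) = smult (a - 1 - of_nat j) (coeff h1 j)"
proof -
  obtain i where j: "j = Suc i"
    using assms by (cases j) auto
  from h1_pde_poly have "coeff (smult [:1-a:] h1 + pCons 0 (pderiv h1)
      + map_poly ((*) [:c, 1:]) (map_poly pderiv h1)) j = 0"
    by (simp add: j)
  then have "[:1-a:] * coeff h1 j + of_nat j * coeff h1 j + [:c, 1:] * pderiv (coeff h1 j) = 0"
    unfolding j by (simp add: coeff_pderiv coeff_map_poly)
  then have "smult (1 - a + of_nat j) (coeff h1 j) + [:c, 1:] * pderiv (coeff h1 j) = 0"
    by (simp add: of_nat_mult_conv_smult smult_add_left)
  then have "[:c, 1:] * pderiv (coeff h1 j) = - smult (1 - a + of_nat j) (coeff h1 j)"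
    by (metis add.commute add_eq_0_iff2)
  then show ?thesis
    by (simp flip: smult_minus_left)
qed

lemma h1_coeff_recurrence:
  assumes "j \<ge> 2"
  shows "degree (smult (c * of_nat (Suc j)) (coeff h1 (Suc j)) + coeff h1 j) = 0"
proof -
  obtain i where j: "j = Suc (Suc i)"
    using assms by (metis add_2_eq_Suc le_Suc_ex)
  from arg_cong[OF h1_pde_reduced_poly, of "\<lambda>P. coeff P j"]
  have "smult (c * of_nat (Suc j)) (coeff h1 (Suc j)) + coeff h1 j
      = [:coeff ([:c, -1:] * pcompose h1_diag [:0, -1:]) j:]"
    by (simp add: j coeff_pderiv coeff_map_poly of_nat_mult_conv_smult numeral_mult_conv_smult
        smult_add_left algebra_simps)
  then show ?thesis by simp
qed

lemma h1_coeff1_recurrence: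
  obtains K
  where "\<And>t. 2 * c * poly (coeff h1 2) t + poly (coeff h1 1) t = a * poly h1_diag t + K"
proof -
  from arg_cong[OF h1_pde_reduced_poly, of "\<lambda>P. coeff P 1"]
  have "smult (2 * c) (coeff h1 2) + coeff h1 1
      = smult a h1_diag + [:coeff ([:c, -1:] * pcompose h1_diag [:0, -1:]) 1:]"
    by (simp add: coeff_pderiv coeff_map_poly numeral_2_eq_2 numeral_mult_conv_smult algebra_simps)
  from arg_cong[OF this, of "\<lambda>P. poly P t" for t] that show ?thesis
    by simp
qed

lemma h1_coeff_degree:
  assumes "j \<ge> 1" and "coeff h1 j \<noteq> 0"
  shows "a - 1 - of_nat j = of_nat (degree (coeff h1 j))"
  using degree_eq_of_linear_ode[OF h1_coeff_ode] assms .

lemma h1_coeff_constant: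
  assumes "j \<ge> 2"
  shows "degree (coeff h1 j) = 0"
proof (rule ccontr)
  assume nonconst: "degree (coeff h1 j) \<noteq> 0"
  then have "coeff h1 j \<noteq> 0"
    by auto
  then have deg_j: "a - 1 - of_nat j = of_nat (degree (coeff h1 j))"
    using h1_coeff_degree assms by simp
  \<comment> \<open>by the ODE, the next coefficient has degree one less, so it cannot cancel the top term\<close>
  have "degree (smult (c * of_nat (Suc j)) (coeff h1 (Suc j)) + coeff h1 j) = degree (coeff h1 j)"
  proof (cases "coeff h1 (Suc j) = 0")
    case False
    then have "a - 1 - of_nat (Suc j) = of_nat (degree (coeff h1 (Suc j)))"
      using h1_coeff_degree[of "Suc j"] by simp
    with deg_j have "of_nat (degree (coeff h1 (Suc j)) + 1)
        = (of_nat (degree (coeff h1 j)) :: complex)"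
      by (simp flip: deg_j add: algebra_simps)
    then have "degree (coeff h1 (Suc j)) + 1 = degree (coeff h1 j)"
      using of_nat_eq_iff by blast
    then have "degree (smult (c * of_nat (Suc j)) (coeff h1 (Suc j))) < degree (coeff h1 j)"
      using degree_smult_le[of "c * of_nat (Suc j)" "coeff h1 (Suc j)"] by linarith
    then show ?thesis
      by (rule degree_add_eq_right)
  qed simp
  with h1_coeff_recurrence[OF assms] nonconst show False
    by simp
qed

lemma a_eq_if_h1_coeff_nonzero:
  assumes "j \<ge> 2" and "coeff h1 j \<noteq> 0"
  shows "a = of_nat j + 1"
  using h1_coeff_degree[of j] h1_coeff_constant[of j] assms by (simp add: diff_eq_eq)

lemma h1_eq_0_if_coeffs_0:
  assumes "\<And>j. j \<ge> 1 \<Longrightarrow> coeff h1 j = 0"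
  shows "h1 = 0"
proof -
  have h1_const: "h1 = [:coeff h1 0:]"
    by (rule poly_eqI) (use assms in \<open>auto simp: coeff_pCons split: nat.split\<close>)
  have "poly (coeff h1 0) d = 0" for d
    using h1_antidiagonal[of d] by (subst (asm) h1_const) simp
  then have "coeff h1 0 = 0"
    using poly_all_0_iff_0 by blast
  then show ?thesis
    by (subst h1_const) simp
qed

lemma h1_coeffs_if_a_eq:
  assumes a: "a = of_nat n + 1" and "n \<ge> 1"
  shows "coeff h1 1 = smult (coeff (coeff h1 1) (n - 1)) ([:c, 1:] ^ (n - 1))"
    and "\<And>j. j \<ge> 2 \<Longrightarrow> j \<noteq> n \<Longrightarrow> coeff h1 j = 0"
    and "n \<ge> 2 \<Longrightarrow> coeff h1 n = [:coeff (coeff h1 n) 0:]"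
proof -
  have "a - 1 - of_nat 1 = (of_nat (n - 1) :: complex)"
    using assms by (simp add: of_nat_diff)
  then show "coeff h1 1 = smult (coeff (coeff h1 1) (n - 1)) ([:c, 1:] ^ (n - 1))"
    using h1_coeff_ode[of 1] by (intro linear_ode_solution) simp
  show "coeff h1 j = 0" if "j \<ge> 2" "j \<noteq> n" for j
    using a_eq_if_h1_coeff_nonzero[of j] that a by auto
  show "n \<ge> 2 \<Longrightarrow> coeff h1 n = [:coeff (coeff h1 n) 0:]"
    using h1_coeff_constant degree_0_id by metis
qed

lemma h1_if_a2:
  assumes "a = 2"
  obtains C where "\<And>x d. ev2 h1 x d = C * (x + d)"
proof -
  define C where "C = coeff (coeff h1 1) 0"
  have "a = of_nat 1 + 1"
    using assms by simp
  note coeffs = h1_coeffs_if_a_eq[OF this order.refl]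
  have h1_eq: "h1 = [:coeff h1 0, [:C:]:]"
  proof (rule poly_eqI)
    fix i
    show "coeff h1 i = coeff [:coeff h1 0, [:C:]:] i"
      using coeffs(1) coeffs(2)[of i] unfolding C_def
      by (cases i; cases "i - 1") (simp_all add: numeral_2_eq_2)
  qed
  have "poly (coeff h1 0) d = C * d" for d
    using h1_antidiagonal[of d] by (subst (asm) h1_eq) (simp add: algebra_simps)
  then have "ev2 h1 x d = C * (x + d)" for x d
    by (subst h1_eq) (simp add: algebra_simps)
  then show ?thesis
    using that by blast
qed

lemma h1_if_a3:
  assumes "a = 3"
  obtains C where "\<And>x d. ev2 h1 x d = C * (x^2 + 3*x*d + 3*c*x + 2*d^2 + 3*c*d)"
proof -
  define C1 where "C1 = coeff (coeff h1 1) 1"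
  define C where "C = coeff (coeff h1 2) 0"
  have "a = of_nat 2 + 1"
    using assms by simp
  note coeffs = h1_coeffs_if_a_eq[OF this]
  have h1_eq: "h1 = [:coeff h1 0, smult C1 [:c, 1:], [:C:]:]"
  proof (rule poly_eqI)
    fix i
    show "coeff h1 i = coeff [:coeff h1 0, smult C1 [:c, 1:], [:C:]:] i"
      using coeffs(1) coeffs(2)[of i] coeffs(3) unfolding C1_def C_def
      by (cases i; cases "i - 1"; cases "i - 2") (simp_all add: numeral_2_eq_2)
  qed
  have diag: "poly h1_diag t = C1 * (c + t) - 2 * t * C" for t
    unfolding poly_h1_diag by (subst h1_eq) (simp add: pderiv_pCons algebra_simps)
  have h1_1: "coeff h1 1 = smult C1 [:c, 1:]" and h1_2: "coeff h1 2 = [:C:]"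
    by (subst h1_eq; simp add: numeral_2_eq_2)+
  obtain K
    where rec: "\<And>t. 2 * c * poly (coeff h1 2) t + poly (coeff h1 1) t = a * poly h1_diag t + K"
    using h1_coeff1_recurrence by blast
  have "2 * c * C + C1 * (c + t) = a * (C1 * (c + t) - 2 * t * C) + K" for t
    using rec[of t] unfolding h1_1 h1_2 diag by (simp add: algebra_simps)
  from this[of 0] this[of 1] have "C1 = 3 * C"
    using assms by (simp add: algebra_simps)
  moreover have "poly (coeff h1 0) d = d * C1 * (c + d) - d^2 * C" for d
    using h1_antidiagonal[of d] by (subst (asm) h1_eq) (simp add: algebra_simps power2_eq_square)
  ultimately have "ev2 h1 x d = C * (x^2 + 3*x*d + 3*c*x + 2*d^2 + 3*c*d)" for x d
    by (subst h1_eq) (simp add: algebra_simps power2_eq_square)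
  then show ?thesis
    using that by blast
qed

lemma h1_eq_0_if_a_large:
  assumes a: "a = of_nat n + 1" and "n \<ge> 3"
  shows "h1 = 0"
proof -
  define k where "k = n - 1"
  have n: "n = Suc k" and "k \<ge> 2"
    using \<open>n \<ge> 3\<close> unfolding k_def by auto
  define C1 where "C1 = coeff (coeff h1 1) k"
  define Cn where "Cn = coeff (coeff h1 n) 0"
  have "n \<ge> 1"
    using \<open>n \<ge> 3\<close> by simp
  note coeffs = h1_coeffs_if_a_eq[OF a this]
  have h1_1: "coeff h1 1 = smult C1 ([:c, 1:] ^ k)"
    using coeffs(1) \<open>n \<ge> 3\<close> by (simp add: C1_def k_def)
  have h1_n: "coeff h1 n = [:Cn:]"
    using coeffs(3) \<open>n \<ge> 3\<close> by (simp add: Cn_def)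
  have h1_2: "coeff h1 2 = 0"
    using coeffs(2)[of 2] \<open>n \<ge> 3\<close> by simp
  have h1_eq: "h1 = pCons (coeff h1 0) (pCons (coeff h1 1) 0) + monom [:Cn:] n"
  proof (rule poly_eqI)
    fix i
    consider "i = 0" | "i = 1" | "i = n" | "i \<ge> 2" "i \<noteq> n"
      by linarith
    then show "coeff h1 i = coeff (pCons (coeff h1 0) (pCons (coeff h1 1) 0) + monom [:Cn:] n) i"
      by cases (use n \<open>k \<ge> 2\<close> h1_n coeffs(2)[of i] in
          \<open>auto simp: coeff_pCons coeff_monom split: nat.split\<close>)
  qed
  have diag: "poly h1_diag t = C1 * (c + t) ^ k + of_nat n * Cn * (-t) ^ k" for t
    unfolding poly_h1_diag
    by (subst h1_eq) (simp add: h1_1[unfolded One_nat_def] pderiv_add pderiv_monom pderiv_pCons n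
        algebra_simps)
  obtain K
    where rec: "\<And>t. 2 * c * poly (coeff h1 2) t + poly (coeff h1 1) t = a * poly h1_diag t + K"
    using h1_coeff1_recurrence by blast
  define G where "G t = C1 * (c + t) ^ k + of_nat (k + 2) * Cn * (-t) ^ k" for t
  have "of_nat (k + 1) * G t = - K" for t
    using rec[of t] unfolding h1_1 h1_2 diag G_def a n
    by (simp add: eq_neg_iff_add_eq_0 algebra_simps)
  then have G_const: "G t = G 0" for t
    by (metis mult_cancel_left of_nat_eq_0_iff add_eq_0_iff_both_eq_0 one_neq_zero)
  have "c ^ k \<noteq> 0" and "k \<noteq> 0"
    using c0 \<open>k \<ge> 2\<close> by auto
  then have C1_eq: "C1 = of_nat (k + 2) * Cn"
    using G_const[of "-c"] by (simp add: G_def power_0_left)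
  moreover have "G c = of_nat (k + 2) * Cn * c ^ k * (2 ^ k + (-1) ^ k)"
    unfolding G_def C1_eq by (simp add: power_mult_distrib power_minus[of c] algebra_simps
        flip: mult_2)
  ultimately have "of_nat (k + 2) * Cn * c ^ k * (2 ^ k + (-1) ^ k - 1) = 0"
    using G_const[of c] \<open>k \<noteq> 0\<close> by (simp add: G_def power_0_left algebra_simps)
  moreover have "(of_nat (k + 2) :: complex) \<noteq> 0"
    by (simp only: of_nat_eq_0_iff)
  ultimately have "Cn = 0"
    using c0 two_power_plus_minus_one_power_neq_1[OF \<open>k \<ge> 2\<close>] by simp
  with C1_eq have "coeff h1 j = 0" if "j \<ge> 1" for j
    using that h1_1 h1_n coeffs(2)[of j] by (cases "j = 1 \<or> j = n") auto
  then show ?thesis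
    by (rule h1_eq_0_if_coeffs_0)
qed

lemma k2_eq: "ev2 k2 l d = poly (coeff k2 0) d + ev2 h1 l d - ev2 h1 0 (l+d)"
  using ls_WWL_W[of l d 0] by (simp add: ev2_0_left algebra_simps)

lemma k2_coeff0_transport:
  "(d + a*m + c) * poly (coeff k2 0) (m+d) - (d + c + (2*a-1)*m) * poly (coeff k2 0) d
    = c * ev2 g1 m d + (a-1) * m * (ev2 h1 m d - ev2 h1 0 (m+d))"
  using ls_WLW_W[of 0 m d] k2_eq[of m d] k2_eq[of 0 d] k2_eq[of 0 "m+d"]
  by (simp add: algebra_simps)

lemma k1_const_if_k2_const:
  assumes "\<And>l d. ev2 k2 l d = K"
  shows "ev2 k1 l d = ev2 k1 0 0"
proof (rule const_if_shift_invariant)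
  show "ev2 k1 m (l + d) = ev2 k1 l (m + d)" for l m d
    using ls_WWW_W[of m l d] assms c0 by simp
qed (rule k1_symm)

lemma h1_eq_0_if_a2:
  assumes a: "a = 2"
  shows "h1 = 0"
proof -
  obtain C where h1_eq: "\<And>x d. ev2 h1 x d = C * (x + d)"
    using h1_if_a2[OF a] by blast
  \<comment> \<open>the transport equation for \<open>coeff k2 0 - c C\<close> is homogeneous, hence \<open>k2 = c C\<close>\<close>
  obtain K where "\<And>t. poly (coeff k2 0 - [:c * C:]) t = K" and "K = 0"
  proof (rule poly_transport_equation)
    show "(d + a * m + c) * poly (coeff k2 0 - [:c * C:]) (m + d)
        = (d + c + (2 * a - 1) * m) * poly (coeff k2 0 - [:c * C:]) d" for m d
      using k2_coeff0_transport[of d m] unfolding g1_eq h1_eq a by (simp add: algebra_simps)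
  qed (use a in simp)
  then have "ev2 k2 l d = c * C" for l d
    unfolding k2_eq h1_eq by simp
  then have "ev2 k1 1 0 = ev2 k1 0 0"
    by (rule k1_const_if_k2_const)
  then have "C * C = 0"
    using ls_WWL_L[of 0 1 0] unfolding h1_eq by simp
  then show ?thesis
    by (intro ev2_eqI) (simp add: h1_eq)
qed

lemma h1_eq_0_if_a3:
  assumes a: "a = 3"
  shows "h1 = 0"
proof -
  obtain C where h1_eq: "\<And>x d. ev2 h1 x d = C * (x^2 + 3*x*d + 3*c*x + 2*d^2 + 3*c*d)"
    using h1_if_a3[OF a] by blast
  define f where "f = poly (coeff k2 0)"
  have transport: "(d + 3*m + c) * f (m+d) - (d + 5*m + c) * f d
      = c * C * m * (m - d - 3*c) - 2 * C * m^2 * (m + d)" for m d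
    using k2_coeff0_transport[of d m] unfolding f_def g1_eq h1_eq a
    by (simp add: algebra_simps power2_eq_square)
  have f0: "f 0 = 16/9 * c^2 * C"
    using transport[where m = "-c/3" and d = 0] c0 by (simp add: field_simps power2_eq_square)
  have fc: "f c = 19/9 * c^2 * C"
    using transport[where m = "-2*c/3" and d = c] c0 by (simp add: field_simps power2_eq_square)
  have "4 * c * f c - 6 * c * f 0 = - 4 * c^3 * C"
    using transport[where m = c and d = 0]
    by (simp add: algebra_simps power2_eq_square power3_eq_cube)
  then have "16/9 * c^3 * C = 0"
    unfolding f0 fc by (simp add: algebra_simps power2_eq_square power3_eq_cube)
  then have "C = 0"
    using c0 by simp
  then show ?thesis
    by (intro ev2_eqI) (simp add: h1_eq)
qed

lemma h1_eq_0: "h1 = 0"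
proof (cases "\<exists>n::nat. n \<ge> 1 \<and> a = of_nat n + 1")
  case True
  then obtain n :: nat where "n \<ge> 1" and a: "a = of_nat n + 1"
    by blast
  then consider "n = 1" | "n = 2" | "n \<ge> 3"
    by linarith
  then show ?thesis
    by cases (use a h1_eq_0_if_a2 h1_eq_0_if_a3 h1_eq_0_if_a_large in auto)
next
  case no_n: False
  have "coeff h1 j = 0" if "j \<ge> 1" for j
  proof (rule ccontr)
    assume nonzero: "coeff h1 j \<noteq> 0"
    show False
    proof (cases "j = 1")
      case True
      then have "a = of_nat (degree (coeff h1 1) + 1) + 1"
        using h1_coeff_degree[of 1] nonzero by (simp add: algebra_simps diff_eq_eq)
      with no_n show False
        by (metis le_add2)
    next
      case False
      with that have "a = of_nat j + 1"
        using a_eq_if_h1_coeff_nonzero nonzero by simp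
      with no_n that show False
        by blast
    qed
  qed
  then show ?thesis
    by (rule h1_eq_0_if_coeffs_0)
qed

lemma g1_eq_0: "g1 = 0"
  by (rule ev2_eqI) (simp add: g1_eq h1_eq_0)

lemma k2_const:
  obtains K where "k2 = [:[:K:]:]" and "a \<noteq> 1 \<Longrightarrow> K = 0"
proof -
  obtain K where K: "\<And>t. poly (coeff k2 0) t = K" and "a \<noteq> 1 \<Longrightarrow> K = 0"
    using poly_transport_equation k2_coeff0_transport by (simp add: g1_eq_0 h1_eq_0) blast
  moreover have "k2 = [:[:K:]:]"
    by (rule ev2_eqI) (simp add: k2_eq h1_eq_0 K)
  ultimately show ?thesis
    using that by blast
qed

lemma k1_const:
  obtains \<kappa> where "k1 = [:[:\<kappa>:]:]" and "a \<noteq> 1 \<Longrightarrow> \<kappa> = 0"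
proof -
  obtain K where "k2 = [:[:K:]:]"
    using k2_const by blast
  then have k1_eq: "ev2 k1 l d = ev2 k1 0 0" for l d
    using k1_const_if_k2_const[of K] by simp
  have "(2 - 2*a) * ev2 k1 0 0 = 0"
    using ls_WLW_L[of 0 1 0] k1_eq[of 1 0] k1_eq[of 0 1] by (simp add: g1_eq_0 algebra_simps)
  moreover have "k1 = [:[:ev2 k1 0 0:]:]"
  proof (rule ev2_eqI)
    show "ev2 k1 l d = ev2 [:[:ev2 k1 0 0:]:] l d" for l d
      using k1_eq[of l d] by simp
  qed
  ultimately show ?thesis
    using that by auto
qed

end

theorem lemma3p4:
  fixes a c :: complex
    and sc :: "gen \<Rightarrow> gen \<Rightarrow> gen \<Rightarrow> complex poly poly"
  assumes ls: "left_symmetric sc"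
    and comp: "compatible sc (Wbr a 0)"
    and LL_L: "sc Lg Lg Lg = [:[:c, 1:], [:1:]:]"
    and LL_W: "sc Lg Lg Wg = 0"
    and c0: "c \<noteq> 0"
    and g2: "sc Lg Wg Wg = [:[:c, 1:], [:a:]:]"
    and h2: "sc Wg Lg Wg = [:[:c:]:]"
  shows "(sc Wg Lg Lg = 0 \<and> sc Lg Wg Lg = 0 \<and> sc Wg Wg Lg = 0 \<and> sc Wg Wg Wg = 0
          \<and> sc Wg Lg Wg = [:[:c:]:] \<and> sc Lg Wg Wg = [:[:c, 1:], [:a:]:])
       \<or> (a = 1 \<and> sc Wg Lg Lg = 0 \<and> sc Lg Wg Lg = 0
          \<and> sc Wg Lg Wg = [:[:c:]:] \<and> sc Lg Wg Wg = [:[:c, 1:], [:1:]:]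
          \<and> (\<exists>k1 k2. sc Wg Wg Lg = [:[:k1:]:] \<and> sc Wg Wg Wg = [:[:k2:]:] \<and> (k1, k2) \<noteq> (0, 0)))"
proof -
  interpret W_a0_compatible_lsca a c sc
    by unfold_locales (fact ls comp LL_L LL_W c0 g2 h2)+
  obtain \<kappa> K where k1: "sc Wg Wg Lg = [:[:\<kappa>:]:]" and k2: "sc Wg Wg Wg = [:[:K:]:]"
    and "a \<noteq> 1 \<Longrightarrow> \<kappa> = 0 \<and> K = 0"
    using k1_const k2_const by metis
  then show ?thesis
    using h1_eq_0 g1_eq_0 g2 h2 by auto
qed

end
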